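(* Let $\mathbf{a}=(a_n)_{n\geq 1}$ be a strong divisibility sequence. Then for every non-negative integer $n$, \[\mathrm{lcm}\left\{\binom{n}{0}_{\mathbf{a}},\binom{n}{1}_{\mathbf{a}},\dots,\binom{n}{n}_{\mathbf{a}}\right\}=\frac{\mathrm{lcm}(a_1,a_2,\dots,a_n,a_{n+1})}{a_{n+1}}.\]
   Context: A strong divisibility sequence is a sequence of positive integers $(a_n)_{n\geq1}$ such that $\gcd(a_n,a_m)=a_{\gcd(n,m)}$ for all positive integers $n,m$. For integers $0\leq k\leq n$, the $\mathbf{a}$-binomial coefficient is $\binom{n}{k}_{\mathbf{a}}:=\frac{a_na_{n-1}\cdots a_{n-k+1}}{a_1a_2\cdots a_k}$ (empty products equal $1$); for a strong divisibility sequence these are positive integers. $\mathrm{lcm}$ denotes the least common positive multiple. *)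

theory Defs
  imports Main
begin

definition strong_div_seq :: "(nat \<Rightarrow> nat) \<Rightarrow> bool" where
  "strong_div_seq a \<longleftrightarrow> (\<forall>n\<ge>1. a n > 0) \<and>
     (\<forall>n\<ge>1. \<forall>m\<ge>1. gcd (a n) (a m) = a (gcd n m))"

text \<open>a-binomial coefficient: (a_n a_{n-1} ... a_{n-k+1}) / (a_1 ... a_k).
  For strong divisibility sequences the division is exact.\<close>
definition a_binom :: "(nat \<Rightarrow> nat) \<Rightarrow> nat \<Rightarrow> nat \<Rightarrow> nat" where
  "a_binom a n k = (\<Prod>i\<in>{n-k+1..n}. a i) div (\<Prod>i\<in>{1..k}. a i)"

end

theory Submission
  imports Defs "HOL-Computational_Algebra.Primes"
begin

text \<open>Fix a prime p and put v i = multiplicity p (a i). Since v (gcd i j) = min (v i) (v j), for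
  every t the indices 1 \<le> i \<le> n + 1 with t \<le> v i are exactly the multiples of a single number
  r t (the level of t). So v i counts the t with r t dvd i, and a Legendre-type count shows that the
  p-adic valuation of the a-binomial coefficient at (n, k) is the number of t for which adding k and
  n - k modulo r t produces a carry. Prime by prime, the theorem then says that the maximum over k
  of (number of carries + v (n + 1)) equals the maximum of v m over 1 \<le> m \<le> n + 1; both
  inequalities come from the largest relevant level t, taking m = r t in one direction and
  k = r t - 1 in the other.\<close>

definition carry :: "nat \<Rightarrow> nat \<Rightarrow> nat \<Rightarrow> nat" where
  "carry r a b = (a mod r + b mod r) div r"

lemma div_add_eq_carry: "(a + b) div r = a div r + b div r + carry r a b"
  unfolding carry_def by (rule div_add1_eq)

lemma carry_le_1: "carry r a b \<le> 1"
proof (cases "r = 0")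
  case False
  then have "a mod r < r" "b mod r < r" by simp_all
  then have "a mod r + b mod r < 2 * r" by linarith
  then show ?thesis unfolding carry_def using less_mult_imp_div_less by fastforce
qed (simp add: carry_def)

lemma carry_eq_0_if_less: "a + b < r \<Longrightarrow> carry r a b = 0"
  unfolding carry_def by simp

lemma dvd_Suc_iff_mod_eq: "0 < r \<Longrightarrow> r dvd Suc x \<longleftrightarrow> x mod r = r - 1"
  for r x :: nat
  by (cases "Suc (x mod r) = r") (auto simp: dvd_eq_mod_eq_0 mod_Suc)

lemma carry_eq_0_if_dvd_Suc:
  assumes "r dvd Suc (a + b)"
  shows "carry r a b = 0"
proof (cases "r = 0")
  case False
  define s where "s = a mod r + b mod r"
  have "(a + b) mod r = r - 1" using assms False by (simp add: dvd_Suc_iff_mod_eq)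
  then have s_mod: "s mod r = r - 1" unfolding s_def by (simp add: mod_add_eq)
  have "a mod r < r" "b mod r < r" using False by simp_all
  then have s_le: "s \<le> 2 * r - 2" unfolding s_def by linarith
  have "s < r"
  proof (rule ccontr)
    assume "\<not> s < r"
    moreover have "s - r < r" using s_le False by linarith
    ultimately have "s mod r = s - r" by (simp add: le_mod_geq)
    then show False using s_mod s_le \<open>\<not> s < r\<close> False by linarith
  qed
  then show ?thesis unfolding carry_def s_def by simp
qed (simp add: carry_def)

lemma carry_eq_1_if_dvd_Suc:
  assumes "r dvd Suc a" and "\<not> r dvd Suc (a + b)"
  shows "carry r a b = 1"
proof -
  have "r \<noteq> 0" using assms(1) by (metis dvd_0_left_iff nat.distinct(1))
  then have a: "a mod r = r - 1" and ab: "(a + b) mod r \<noteq> r - 1"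
    using assms by (simp_all add: dvd_Suc_iff_mod_eq)
  have "b mod r \<noteq> 0"
    using ab a by (metis add.right_neutral mod_add_right_eq)
  then have "r \<le> a mod r + b mod r" using a by linarith
  then have "1 \<le> carry r a b"
    unfolding carry_def using \<open>r \<noteq> 0\<close> div_le_mono[of r _ r] by fastforce
  then show ?thesis using carry_le_1[of r a b] by linarith
qed

lemma sum_of_bool_dvd: "(\<Sum>i = 1..x. of_bool (r dvd i) :: nat) = x div r"
  for r x :: nat
  by (induction x) (simp_all add: div_Suc dvd_eq_mod_eq_0)

lemma sum_of_bool_le: "(\<Sum>t = 1..N. of_bool (t \<le> w) :: nat) = min w N"
  for w N :: nat
  by (induction N) (auto simp: sum.cl_ivl_Suc)

locale gcd_min_seq =
  fixes v :: "nat \<Rightarrow> nat"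
  assumes v_gcd: "\<And>i j. 1 \<le> i \<Longrightarrow> 1 \<le> j \<Longrightarrow> v (gcd i j) = min (v i) (v j)"
begin

context
  fixes n :: nat
begin

lemma superlevel_set_multiples:
  "\<exists>r\<ge>1. \<forall>i\<in>{1..n+1}. t \<le> v i \<longleftrightarrow> r dvd i"
proof (cases "\<exists>i\<in>{1..n+1}. t \<le> v i")
  case False
  have "\<not> (n + 2) dvd i" if "i \<in> {1..n+1}" for i
    using that by (auto dest: dvd_imp_le)
  then show ?thesis using False by (intro exI[of _ "n + 2"]) auto
next
  case True
  define R where "R = {i\<in>{1..n+1}. t \<le> v i}"
  define r where "r = Min R"
  have "finite R" "R \<noteq> {}" using True unfolding R_def by auto
  then have "r \<in> R" and r_min: "\<And>i. i \<in> R \<Longrightarrow> r \<le> i" unfolding r_def by simp_all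
  then have r: "1 \<le> r" "r \<le> n + 1" "t \<le> v r" unfolding R_def by auto
  have "t \<le> v i \<longleftrightarrow> r dvd i" if i: "i \<in> {1..n+1}" for i
  proof
    assume "t \<le> v i"
    have "gcd i r \<le> r" using r(1) by (simp add: gcd_le2_nat)
    then have "gcd i r \<le> n + 1" using r(2) by linarith
    then have "gcd i r \<in> R"
      using i r \<open>t \<le> v i\<close> v_gcd[of i r] by (auto simp: R_def Suc_le_eq)
    then have "gcd i r = r" using r_min[of "gcd i r"] \<open>gcd i r \<le> r\<close> by simp
    then show "r dvd i" by (metis gcd_dvd1)
  next
    assume "r dvd i"
    then have "v r = min (v i) (v r)" using v_gcd[of i r] i r(1) by (simp add: gcd_nat.absorb2)
    then show "t \<le> v i" using r(3) by linarith
  qed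
  then show ?thesis using r(1) by blast
qed

definition level :: "nat \<Rightarrow> nat" where
  "level t = (SOME r. 1 \<le> r \<and> (\<forall>i\<in>{1..n+1}. t \<le> v i \<longleftrightarrow> r dvd i))"

lemma level_pos: "1 \<le> level t"
  and le_v_iff_level_dvd: "i \<in> {1..n+1} \<Longrightarrow> t \<le> v i \<longleftrightarrow> level t dvd i"
  using someI_ex[OF superlevel_set_multiples[of t]] unfolding level_def[symmetric] by auto

definition height :: nat where
  "height = Max (v ` {1..n+1})"

lemma v_eq_count_levels:
  assumes "i \<in> {1..n+1}"
  shows "v i = (\<Sum>t = 1..height. of_bool (level t dvd i))"
proof -
  have "v i \<le> height" unfolding height_def using assms by simp
  then have "v i = (\<Sum>t = 1..height. of_bool (t \<le> v i))"
    using sum_of_bool_le[of "v i" height] by (simp only: min.absorb1)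
  also have "\<dots> = (\<Sum>t = 1..height. of_bool (level t dvd i))"
    using le_v_iff_level_dvd[OF assms] by simp
  finally show ?thesis .
qed

lemma sum_v_eq_sum_div_level:
  assumes "x \<le> n + 1"
  shows "(\<Sum>i = 1..x. v i) = (\<Sum>t = 1..height. x div level t)"
proof -
  have "(\<Sum>i = 1..x. v i) = (\<Sum>i = 1..x. \<Sum>t = 1..height. of_bool (level t dvd i))"
    using assms by (intro sum.cong) (auto simp: v_eq_count_levels)
  also have "\<dots> = (\<Sum>t = 1..height. x div level t)"
    by (subst sum.swap) (intro sum.cong refl sum_of_bool_dvd)
  finally show ?thesis .
qed

definition carries :: "nat \<Rightarrow> nat" where
  "carries k = (\<Sum>t = 1..height. carry (level t) k (n - k))"

lemma sum_v_window:
  assumes "k \<le> n"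
  shows "(\<Sum>i = n-k+1..n. v i) = (\<Sum>i = 1..k. v i) + carries k"
proof -
  have "{1..n} = {1..n-k} \<union> {n-k+1..n}" by auto
  then have "(\<Sum>i = 1..n. v i) = (\<Sum>i = 1..n-k. v i) + (\<Sum>i = n-k+1..n. v i)"
    by (simp add: sum.union_disjoint)
  moreover have "(\<Sum>i = 1..n. v i) = (\<Sum>t = 1..height. n div level t)"
    by (rule sum_v_eq_sum_div_level) simp
  also have "\<dots> = (\<Sum>t = 1..height. k div level t + (n - k) div level t + carry (level t) k (n - k))"
    using div_add_eq_carry[of k "n - k"] assms by simp
  also have "\<dots> = (\<Sum>i = 1..k. v i) + (\<Sum>i = 1..n-k. v i) + carries k"
    using sum_v_eq_sum_div_level[of k] sum_v_eq_sum_div_level[of "n - k"] assms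
    by (simp add: carries_def sum.distrib)
  ultimately show ?thesis by simp
qed

lemma carries_plus_v_le:
  assumes "k \<le> n"
  shows "\<exists>m\<in>{1..n+1}. carries k + v (n + 1) \<le> v m"
proof -
  define f where "f t = carry (level t) k (n - k) + of_bool (level t dvd n + 1)" for t
  define T where "T = {t\<in>{1..height}. f t \<noteq> 0}"
  have sum_f: "carries k + v (n + 1) = (\<Sum>t = 1..height. f t)"
    using v_eq_count_levels[of "n + 1"] by (simp add: carries_def f_def sum.distrib)
  have f_le_1: "f t \<le> 1" for t
    using carry_eq_0_if_dvd_Suc[of "level t" k "n - k"] carry_le_1[of "level t" k "n - k"] assms
    by (auto simp: f_def)
  have level_le: "level t \<le> n + 1" if "f t \<noteq> 0" for t
  proof (cases "level t dvd n + 1")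
    case False
    then have "carry (level t) k (n - k) \<noteq> 0" using that by (simp add: f_def)
    then show ?thesis using carry_eq_0_if_less[of k "n - k" "level t"] assms by fastforce
  qed (simp add: dvd_imp_le)
  txt \<open>Every contributing level lies below the largest one, ts, and ts \<le> v (level ts).\<close>
  show ?thesis
  proof (cases "T = {}")
    case True
    then have "(\<Sum>t = 1..height. f t) = 0" by (simp add: T_def)
    then show ?thesis using sum_f by (intro bexI[of _ 1]) auto
  next
    case False
    define ts where "ts = Max T"
    have "finite T" by (simp add: T_def)
    then have "ts \<in> T" and ts_max: "\<And>t. t \<in> T \<Longrightarrow> t \<le> ts"
      using False by (simp_all add: ts_def)
    then have m: "level ts \<in> {1..n+1}" using level_le level_pos by (simp add: T_def)
    have "(\<Sum>t = 1..height. f t) \<le> (\<Sum>t = 1..height. of_bool (t \<le> ts))"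
      using ts_max f_le_1 by (intro sum_mono) (fastforce simp: T_def)
    also have "\<dots> \<le> ts" unfolding sum_of_bool_le by simp
    also have "\<dots> \<le> v (level ts)" using le_v_iff_level_dvd[OF m] by simp
    finally show ?thesis using sum_f m by auto
  qed
qed

lemma v_le_carries_plus:
  assumes m: "m \<in> {1..n+1}"
  shows "\<exists>k\<le>n. v m \<le> carries k + v (n + 1)"
proof -
  define T where "T = {t\<in>{1..height}. level t dvd m \<and> \<not> level t dvd n + 1}"
  txt \<open>Choosing k + 1 = level ts for the largest ts \<in> T makes every level in T carry.\<close>
  obtain k where "k \<le> n" and carry_T: "\<And>t. t \<in> T \<Longrightarrow> carry (level t) k (n - k) = 1"
  proof (cases "T = {}")
    case False
    define ts where "ts = Max T"
    have "finite T" by (simp add: T_def)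
    then have "ts \<in> T" and ts_max: "\<And>t. t \<in> T \<Longrightarrow> t \<le> ts"
      using False by (simp_all add: ts_def)
    then have "level ts \<le> m" using m by (auto simp: T_def dvd_imp_le)
    then have ts_level: "level ts \<in> {1..n+1}" using m level_pos by simp
    define k where "k = level ts - 1"
    have k: "k \<le> n" "Suc k = level ts" using ts_level by (auto simp: k_def)
    have "carry (level t) k (n - k) = 1" if "t \<in> T" for t
    proof (rule carry_eq_1_if_dvd_Suc)
      have "ts \<le> v (level ts)" using le_v_iff_level_dvd[OF ts_level, of ts] by simp
      then have "t \<le> v (level ts)" using ts_max[OF that] by simp
      then show "level t dvd Suc k" using le_v_iff_level_dvd[OF ts_level] k(2) by simp
      show "\<not> level t dvd Suc (k + (n - k))" using that k(1) by (simp add: T_def)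
    qed
    with k(1) show ?thesis by (rule that)
  qed (auto intro: that[of 0])
  have "(\<Sum>t = 1..height. of_bool (level t dvd m))
      \<le> (\<Sum>t = 1..height. carry (level t) k (n - k) + of_bool (level t dvd n + 1))"
    using carry_T by (intro sum_mono) (auto simp: T_def)
  then show ?thesis
    using \<open>k \<le> n\<close> v_eq_count_levels[OF m] v_eq_count_levels[of "n + 1"]
    by (auto simp: carries_def sum.distrib)
qed

end

end

lemma strong_div_seq_pos: "strong_div_seq a \<Longrightarrow> i \<noteq> 0 \<Longrightarrow> 0 < a i"
  by (simp add: strong_div_seq_def)

lemma gcd_min_seq_multiplicity:
  assumes "strong_div_seq a" and "prime p"
  shows "gcd_min_seq (\<lambda>i. multiplicity p (a i))"
proof
  fix i j :: nat
  assume "1 \<le> i" "1 \<le> j"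
  then have "a (gcd i j) = gcd (a i) (a j)" and "a i \<noteq> 0" and "a j \<noteq> 0"
    using assms(1) by (auto simp: strong_div_seq_def)
  then show "multiplicity p (a (gcd i j)) = min (multiplicity p (a i)) (multiplicity p (a j))"
    using assms(2) by (simp add: multiplicity_gcd)
qed

lemma multiplicity_prod_strong_div_seq:
  assumes "strong_div_seq a" and "prime p" and "finite A" and "0 \<notin> A"
  shows "multiplicity p (\<Prod>i\<in>A. a i) = (\<Sum>i\<in>A. multiplicity p (a i))"
proof (rule prime_elem_multiplicity_prod_distrib)
  show "0 \<notin> a ` A" using assms(4) strong_div_seq_pos[OF assms(1)] by (metis imageE less_not_refl)
  show "prime_elem p" using assms(2) by simp
  show "finite A" by (rule assms(3))
qed

lemma prod_strong_div_seq_pos: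
  assumes "strong_div_seq a" and "0 \<notin> A"
  shows "0 < (\<Prod>i\<in>A. a i)"
  using assms(2) strong_div_seq_pos[OF assms(1)] by (intro prod_pos) (metis)

lemma multiplicity_prod_window:
  assumes "strong_div_seq a" and "prime p" and "k \<le> n"
  shows "multiplicity p (\<Prod>i = n-k+1..n. a i)
    = multiplicity p (\<Prod>i = 1..k. a i) + gcd_min_seq.carries (\<lambda>i. multiplicity p (a i)) n k"
  using gcd_min_seq.sum_v_window[OF gcd_min_seq_multiplicity[OF assms(1,2)] assms(3)] assms(1,2)
  by (simp add: multiplicity_prod_strong_div_seq)

lemma prod_initial_dvd_prod_window:
  assumes "strong_div_seq a" and "k \<le> n"
  shows "(\<Prod>i = 1..k. a i) dvd (\<Prod>i = n-k+1..n. a i)"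
proof (rule multiplicity_le_imp_dvd)
  have "0 < (\<Prod>i = 1..k. a i)" by (rule prod_strong_div_seq_pos[OF assms(1)]) simp
  then show "(\<Prod>i = 1..k. a i) \<noteq> 0" by simp
  show "multiplicity p (\<Prod>i = 1..k. a i) \<le> multiplicity p (\<Prod>i = n-k+1..n. a i)"
    if "prime p" for p
    using multiplicity_prod_window[OF assms(1) that assms(2)] by simp
qed

lemma a_binom_mult_prod:
  assumes "strong_div_seq a" and "k \<le> n"
  shows "(\<Prod>i = 1..k. a i) * a_binom a n k = (\<Prod>i = n-k+1..n. a i)"
  using prod_initial_dvd_prod_window[OF assms] by (simp add: a_binom_def)

lemma a_binom_pos:
  assumes "strong_div_seq a" and "k \<le> n"
  shows "0 < a_binom a n k"
proof -
  have "0 < (\<Prod>i = n-k+1..n. a i)" by (rule prod_strong_div_seq_pos[OF assms(1)]) simp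
  then show ?thesis using a_binom_mult_prod[OF assms] by (cases "a_binom a n k") auto
qed

lemma multiplicity_a_binom:
  assumes "strong_div_seq a" and "prime p" and "k \<le> n"
  shows "multiplicity p (a_binom a n k) = gcd_min_seq.carries (\<lambda>i. multiplicity p (a i)) n k"
proof -
  have "multiplicity p (\<Prod>i = n-k+1..n. a i)
      = multiplicity p (\<Prod>i = 1..k. a i) + multiplicity p (a_binom a n k)"
  proof -
    have "0 < (\<Prod>i = 1..k. a i)" by (rule prod_strong_div_seq_pos[OF assms(1)]) simp
    then show ?thesis
      using a_binom_mult_prod[OF assms(1,3)] a_binom_pos[OF assms(1,3)] assms(2)
      by (metis prime_elem_multiplicity_mult_distrib prime_imp_prime_elem less_not_refl)
  qed
  then show ?thesis using multiplicity_prod_window[OF assms] by simp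
qed

lemma Lcm_eq_Lcm_div_by_multiplicity:
  fixes B C :: "nat set" and c :: nat
  assumes "finite B" and "finite C" and "0 \<notin> B" and "0 \<notin> C" and "c \<in> C"
    and upper: "\<And>p b. prime p \<Longrightarrow> b \<in> B \<Longrightarrow>
      \<exists>x\<in>C. multiplicity p b + multiplicity p c \<le> multiplicity p x"
    and lower: "\<And>p x. prime p \<Longrightarrow> x \<in> C \<Longrightarrow>
      \<exists>b\<in>B. multiplicity p x \<le> multiplicity p b + multiplicity p c"
  shows "Lcm B = Lcm C div c"
proof -
  have LB: "Lcm B \<noteq> 0" and LC: "Lcm C \<noteq> 0" using assms(1-4) by (simp_all add: Lcm_0_iff)
  have c: "c \<noteq> 0" using assms(4,5) by metis
  have "c dvd Lcm C" using assms(5) by (rule dvd_Lcm)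
  have "Lcm B dvd Lcm C div c"
  proof (rule Lcm_least)
    fix b assume b: "b \<in> B"
    have "b * c dvd Lcm C"
    proof (rule multiplicity_le_imp_dvd)
      show "b * c \<noteq> 0" using b assms(3) c by (metis mult_eq_0_iff)
      fix p :: nat assume p: "prime p"
      obtain x where "x \<in> C" and x: "multiplicity p b + multiplicity p c \<le> multiplicity p x"
        using upper[OF p b] by blast
      have "b \<noteq> 0" using b assms(3) by metis
      then have "multiplicity p (b * c) = multiplicity p b + multiplicity p c"
        using c p by (simp add: prime_elem_multiplicity_mult_distrib)
      also have "\<dots> \<le> multiplicity p x" by (rule x)
      also have "\<dots> \<le> multiplicity p (Lcm C)"
        using \<open>x \<in> C\<close> LC by (intro dvd_imp_multiplicity_le dvd_Lcm)
      finally show "multiplicity p (b * c) \<le> multiplicity p (Lcm C)" .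
    qed
    then show "b dvd Lcm C div c" using c \<open>c dvd Lcm C\<close> by (simp add: dvd_div_iff_mult)
  qed
  moreover have "Lcm C dvd Lcm B * c"
  proof (rule Lcm_least)
    fix x assume x: "x \<in> C"
    show "x dvd Lcm B * c"
    proof (rule multiplicity_le_imp_dvd)
      show "x \<noteq> 0" using x assms(4) by metis
      fix p :: nat assume p: "prime p"
      obtain b where "b \<in> B" and b: "multiplicity p x \<le> multiplicity p b + multiplicity p c"
        using lower[OF p x] by blast
      note b
      also have "multiplicity p b \<le> multiplicity p (Lcm B)"
        using \<open>b \<in> B\<close> LB by (intro dvd_imp_multiplicity_le dvd_Lcm)
      also have "multiplicity p (Lcm B) + multiplicity p c = multiplicity p (Lcm B * c)"
        using LB c p by (simp add: prime_elem_multiplicity_mult_distrib)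
      finally show "multiplicity p x \<le> multiplicity p (Lcm B * c)" by simp
    qed
  qed
  then have "Lcm C div c dvd Lcm B" using c \<open>c dvd Lcm C\<close> by (simp add: div_dvd_iff_mult)
  ultimately show ?thesis by (rule dvd_antisym)
qed

theorem theorem1:
  fixes a :: "nat \<Rightarrow> nat" and n :: nat
  assumes "strong_div_seq a"
  shows "Lcm {a_binom a n k | k. k \<le> n} = Lcm (a ` {1..n+1}) div a (n+1)"
proof (rule Lcm_eq_Lcm_div_by_multiplicity)
  have "{a_binom a n k | k. k \<le> n} = a_binom a n ` {..n}" by auto
  then show "finite {a_binom a n k | k. k \<le> n}" by simp
  show "0 \<notin> {a_binom a n k | k. k \<le> n}" using a_binom_pos[OF assms] by fastforce
  show "0 \<notin> a ` {1..n+1}" using strong_div_seq_pos[OF assms] by (metis imageE less_irrefl atLeastAtMost_iff not_one_le_zero)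
next
  fix p b :: nat assume p: "prime p" and "b \<in> {a_binom a n k | k. k \<le> n}"
  then obtain k where k: "k \<le> n" and b: "b = a_binom a n k" by blast
  interpret gcd_min_seq "\<lambda>i. multiplicity p (a i)"
    by (rule gcd_min_seq_multiplicity[OF assms p])
  obtain m where "m \<in> {1..n+1}"
    and "carries n k + multiplicity p (a (n+1)) \<le> multiplicity p (a m)"
    using carries_plus_v_le[OF k] by blast
  then show "\<exists>x\<in>a ` {1..n+1}. multiplicity p b + multiplicity p (a (n+1)) \<le> multiplicity p x"
    using multiplicity_a_binom[OF assms p k] b by (intro bexI[of _ "a m"]) simp_all
next
  fix p x :: nat assume p: "prime p" and "x \<in> a ` {1..n+1}"
  then obtain m where m: "m \<in> {1..n+1}" and x: "x = a m" by blast
  interpret gcd_min_seq "\<lambda>i. multiplicity p (a i)"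
    by (rule gcd_min_seq_multiplicity[OF assms p])
  obtain k where k: "k \<le> n" and "multiplicity p (a m) \<le> carries n k + multiplicity p (a (n+1))"
    using v_le_carries_plus[OF m] by blast
  then show "\<exists>b\<in>{a_binom a n k | k. k \<le> n}.
      multiplicity p x \<le> multiplicity p b + multiplicity p (a (n+1))"
    using multiplicity_a_binom[OF assms p k] x k by (intro bexI[of _ "a_binom a n k"]) auto
qed simp_all

end
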